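(* Let $\lambda\ge0$. For all integers $k,m\ge1$ there exists $t$ with the following property. Let $G$ be a $\lambda$-spread digraph such that no vertex of $G$ is $(k,m)$-rich. Then $V(G)$ can be partitioned into $t$ sets $X_1,\dots,X_t$ such that for each $1\le i\le t$, either no $(m+1)$-clique of $G[X_i]$ has a source, or no $(m+1)$-clique of $G[X_i]$ has a sink.
   Context: Digraphs are finite, with no loops, parallel edges or antiparallel pairs; $G^*$ is the underlying undirected graph. $N^+(v)$, $N^-(v)$ are the out- and in-neighbourhoods of $v$. A digraph $G$ is $\lambda$-spread if for every vertex $v$ and all $A\subseteq N^+(v)$, $B\subseteq N^-(v)$ with $|A|=|B|=\lambda$, some vertex of $A$ is $G^*$-adjacent with some vertex of $B$. A $k$-clique is a clique (in $G^*$) of cardinality $k$. For a clique $X$ of $G$, a vertex of $X$ is a source of $X$ if it is adjacent to every other vertex of $X$, and a sink if it is adjacent from every other vertex of $X$. For $A,B\subseteq V(G)$, $A$ is $G^*$-complete with $B$ if $A\cap B=\emptyset$ and every vertex of $A$ is $G^*$-adjacent with every vertex of $B$. A vertex $v$ is $(k,m)$-rich if there exist $k$ pairwise disjoint $m$-cliques $A_1,\dots,A_k\subseteq N^+(v)$ and $k$ pairwise disjoint $m$-cliques $B_1,\dots,B_k\subseteq N^-(v)$ such that $A_1\cup\dots\cup A_k$ is $G^*$-complete with $B_1\cup\dots\cup B_k$. *)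

theory Defs
  imports Main
begin

text \<open>A digraph is given by a finite vertex set V and an edge relation E
  (E u v means the edge u -> v). Being a relation excludes parallel edges;
  we require no loops and no antiparallel pairs.\<close>

definition digraph :: "'a set \<Rightarrow> ('a \<Rightarrow> 'a \<Rightarrow> bool) \<Rightarrow> bool" where
  "digraph V E \<longleftrightarrow> finite V \<and> (\<forall>u v. E u v \<longrightarrow> u \<in> V \<and> v \<in> V)
     \<and> (\<forall>v. \<not> E v v) \<and> (\<forall>u v. \<not> (E u v \<and> E v u))"

definition uadj :: "('a \<Rightarrow> 'a \<Rightarrow> bool) \<Rightarrow> 'a \<Rightarrow> 'a \<Rightarrow> bool" where
  "uadj E u v \<longleftrightarrow> E u v \<or> E v u"

definition out_nbhd :: "'a set \<Rightarrow> ('a \<Rightarrow> 'a \<Rightarrow> bool) \<Rightarrow> 'a \<Rightarrow> 'a set" where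
  "out_nbhd V E v = {u \<in> V. E v u}"

definition in_nbhd :: "'a set \<Rightarrow> ('a \<Rightarrow> 'a \<Rightarrow> bool) \<Rightarrow> 'a \<Rightarrow> 'a set" where
  "in_nbhd V E v = {u \<in> V. E u v}"

definition spread :: "nat \<Rightarrow> 'a set \<Rightarrow> ('a \<Rightarrow> 'a \<Rightarrow> bool) \<Rightarrow> bool" where
  "spread lam V E \<longleftrightarrow> (\<forall>v \<in> V. \<forall>A B. A \<subseteq> out_nbhd V E v \<longrightarrow> B \<subseteq> in_nbhd V E v \<longrightarrow>
      card A = lam \<longrightarrow> card B = lam \<longrightarrow> (\<exists>a \<in> A. \<exists>b \<in> B. uadj E a b))"

definition is_clique :: "('a \<Rightarrow> 'a \<Rightarrow> bool) \<Rightarrow> 'a set \<Rightarrow> bool" where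
  "is_clique E X \<longleftrightarrow> (\<forall>u \<in> X. \<forall>v \<in> X. u \<noteq> v \<longrightarrow> uadj E u v)"

definition k_clique :: "nat \<Rightarrow> 'a set \<Rightarrow> ('a \<Rightarrow> 'a \<Rightarrow> bool) \<Rightarrow> 'a set \<Rightarrow> bool" where
  "k_clique k V E X \<longleftrightarrow> X \<subseteq> V \<and> finite X \<and> card X = k \<and> is_clique E X"

definition is_source :: "('a \<Rightarrow> 'a \<Rightarrow> bool) \<Rightarrow> 'a set \<Rightarrow> 'a \<Rightarrow> bool" where
  "is_source E X v \<longleftrightarrow> v \<in> X \<and> (\<forall>u \<in> X. u \<noteq> v \<longrightarrow> E v u)"

definition is_sink :: "('a \<Rightarrow> 'a \<Rightarrow> bool) \<Rightarrow> 'a set \<Rightarrow> 'a \<Rightarrow> bool" where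
  "is_sink E X v \<longleftrightarrow> v \<in> X \<and> (\<forall>u \<in> X. u \<noteq> v \<longrightarrow> E u v)"

definition ucomplete :: "('a \<Rightarrow> 'a \<Rightarrow> bool) \<Rightarrow> 'a set \<Rightarrow> 'a set \<Rightarrow> bool" where
  "ucomplete E A B \<longleftrightarrow> A \<inter> B = {} \<and> (\<forall>a \<in> A. \<forall>b \<in> B. uadj E a b)"

definition rich :: "nat \<Rightarrow> nat \<Rightarrow> 'a set \<Rightarrow> ('a \<Rightarrow> 'a \<Rightarrow> bool) \<Rightarrow> 'a \<Rightarrow> bool" where
  "rich k m V E v \<longleftrightarrow> (\<exists>As Bs :: nat \<Rightarrow> 'a set.
     (\<forall>i < k. k_clique m V E (As i) \<and> As i \<subseteq> out_nbhd V E v) \<and>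
     (\<forall>i < k. k_clique m V E (Bs i) \<and> Bs i \<subseteq> in_nbhd V E v) \<and>
     (\<forall>i < k. \<forall>j < k. i \<noteq> j \<longrightarrow> As i \<inter> As j = {} \<and> Bs i \<inter> Bs j = {}) \<and>
     ucomplete E (\<Union>i < k. As i) (\<Union>i < k. Bs i))"

text \<open>Cliques of the induced subdigraph G[X] are exactly the cliques of G contained in X.\<close>
definition no_source_clique :: "nat \<Rightarrow> ('a \<Rightarrow> 'a \<Rightarrow> bool) \<Rightarrow> 'a set \<Rightarrow> bool" where
  "no_source_clique n E X \<longleftrightarrow> (\<forall>C. k_clique n X E C \<longrightarrow> \<not> (\<exists>s. is_source E C s))"

definition no_sink_clique :: "nat \<Rightarrow> ('a \<Rightarrow> 'a \<Rightarrow> bool) \<Rightarrow> 'a set \<Rightarrow> bool" where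
  "no_sink_clique n E X \<longleftrightarrow> (\<forall>C. k_clique n X E C \<longrightarrow> \<not> (\<exists>s. is_sink E C s))"

end

theory Submission
  imports Defs "HOL-Library.Ramsey" "HOL-Library.Disjoint_Sets"
begin

text \<open>
  Fix a vertex v. By Ramsey's theorem there is an M, depending only on k, m and lam, such that if v
  had M disjoint m-cliques in its out-neighbourhood and M in its in-neighbourhood, then
  n = max k lam of each kind could be chosen so that whether the a-th vertex of an out-clique is
  adjacent to the b-th vertex of an in-clique depends only on (a, b). If every pair (a, b) is
  adjacent, v is (k,m)-rich; a non-adjacent pair gives lam out-neighbours and lam in-neighbours of v
  with no edge between them, contradicting lam-spreadness.

  Hence on one side of every vertex v there are fewer than M disjoint m-cliques, and the union of a
  maximal disjoint family is a set T v of at most m M vertices meeting all m-cliques on that side.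
  The conflict graph (u adjacent to v when u \<in> T v) has average degree at most 2 m M, so it is
  properly colourable with 2 m M + 1 colours. Splitting each colour class by the side chosen for its
  vertices gives the partition: in a part of out-side vertices an (m+1)-clique C with source s
  would make C - {s} an m-clique in the out-neighbourhood of s missing T s, and dually for sinks.
\<close>

lemma exists_low_conflict_vertex:
  assumes "finite V" and "V \<noteq> {}" and T_small: "\<And>v. v \<in> V \<Longrightarrow> card (T v \<inter> V) \<le> d"
  shows "\<exists>w\<in>V. card {u\<in>V. u \<noteq> w \<and> (u \<in> T w \<or> w \<in> T u)} \<le> 2 * d"
proof (rule ccontr)
  assume "\<not> ?thesis"
  then have many: "2 * d < card {u\<in>V. u \<noteq> w \<and> (u \<in> T w \<or> w \<in> T u)}" if "w \<in> V" for w
    using that by force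
  define hits where "hits w = card {u\<in>V. w \<in> T u}" for w
  have conflicts_le: "card {u\<in>V. u \<noteq> w \<and> (u \<in> T w \<or> w \<in> T u)} \<le> d + hits w" if "w \<in> V" for w
  proof -
    have "card {u\<in>V. u \<noteq> w \<and> (u \<in> T w \<or> w \<in> T u)} \<le> card ((T w \<inter> V) \<union> {u\<in>V. w \<in> T u})"
      by (rule card_mono) (use \<open>finite V\<close> in auto)
    also have "\<dots> \<le> card (T w \<inter> V) + hits w"
      unfolding hits_def by (rule card_Un_le)
    finally show ?thesis
      using T_small[OF that] by linarith
  qed
  have "(\<Sum>w\<in>V. hits w) = (\<Sum>w\<in>V. \<Sum>u\<in>V. if w \<in> T u then 1 else 0)"
    unfolding hits_def using \<open>finite V\<close> by (simp add: sum.inter_filter[symmetric])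
  also have "\<dots> = (\<Sum>u\<in>V. \<Sum>w\<in>V. if w \<in> T u then 1 else 0)"
    by (rule sum.swap)
  also have "\<dots> = (\<Sum>u\<in>V. card (T u \<inter> V))"
    using \<open>finite V\<close> by (simp add: sum.inter_filter[symmetric] Int_def conj_commute)
  also have "\<dots> \<le> d * card V"
    using sum_mono[of V "\<lambda>u. card (T u \<inter> V)" "\<lambda>_. d"] T_small by (simp add: mult.commute)
  finally have "(\<Sum>w\<in>V. hits w) \<le> d * card V" .
  moreover have "2 * d + 1 \<le> d + hits w" if "w \<in> V" for w
    using many[OF that] conflicts_le[OF that] by linarith
  then have "(\<Sum>w\<in>V. 2 * d + 1) \<le> (\<Sum>w\<in>V. d + hits w)"
    by (rule sum_mono)
  ultimately have "(2 * d + 1) * card V \<le> 2 * d * card V"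
    by (simp add: sum.distrib)
  then show False
    using \<open>finite V\<close> \<open>V \<noteq> {}\<close> by (simp add: card_gt_0_iff)
qed

lemma bounded_conflict_colouring:
  assumes "finite V" and T_small: "\<And>v. v \<in> V \<Longrightarrow> card (T v \<inter> V) \<le> d"
  shows "\<exists>c::'a \<Rightarrow> nat. (\<forall>v\<in>V. c v < 2 * d + 1) \<and>
           (\<forall>v\<in>V. \<forall>u\<in>V. u \<in> T v \<longrightarrow> u \<noteq> v \<longrightarrow> c u \<noteq> c v)"
  using \<open>finite V\<close> T_small
proof (induction V rule: finite_remove_induct)
  case empty
  then show ?case by simp
next
  case (remove A)
  obtain w where w: "w \<in> A"
    and few: "card {u\<in>A. u \<noteq> w \<and> (u \<in> T w \<or> w \<in> T u)} \<le> 2 * d"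
    using exists_low_conflict_vertex[OF remove.hyps(1,2) remove.prems] by meson
  define N where "N = {u\<in>A. u \<noteq> w \<and> (u \<in> T w \<or> w \<in> T u)}"
  have "card (T v \<inter> (A - {w})) \<le> card (T v \<inter> A)" for v
    by (rule card_mono) (use remove.hyps(1) in auto)
  then have "card (T v \<inter> (A - {w})) \<le> d" if "v \<in> A - {w}" for v
    using remove.prems[of v] that by (meson DiffD1 order_trans)
  then obtain c where c_less: "\<forall>v\<in>A - {w}. c v < 2 * d + 1"
    and c_proper: "\<forall>v\<in>A - {w}. \<forall>u\<in>A - {w}. u \<in> T v \<longrightarrow> u \<noteq> v \<longrightarrow> c u \<noteq> c v"
    using remove.IH[OF w] by blast
  have "card (c ` N) \<le> 2 * d"
    using few card_image_le[of N c] remove.hyps(1) unfolding N_def by simp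
  then have "\<not> {..<2 * d + 1} \<subseteq> c ` N"
    using card_mono[of "c ` N" "{..<2 * d + 1}"] remove.hyps(1) unfolding N_def by auto
  then obtain free where "free < 2 * d + 1" and "free \<notin> c ` N"
    by auto
  then show ?case
    using c_less c_proper w unfolding N_def
    by (intro exI[of _ "c(w := free)"]) (auto simp: image_iff)
qed

definition disjoint_members :: "('b set \<Rightarrow> bool) \<Rightarrow> nat \<Rightarrow> bool" where
  "disjoint_members Q M \<longleftrightarrow> (\<exists>A. (\<forall>i<M. Q (A i)) \<and> disjoint_family_on A {..<M})"

lemma hitting_set_if_no_disjoint_members:
  assumes "\<And>C. Q C \<Longrightarrow> finite C \<and> card C \<le> m" and "\<not> disjoint_members Q M"
  shows "\<exists>T. finite T \<and> card T \<le> m * M \<and> (\<forall>C. Q C \<longrightarrow> C \<inter> T \<noteq> {})"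
  using assms
proof (induction M arbitrary: Q)
  case 0
  then show ?case
    by (simp add: disjoint_members_def disjoint_family_on_def)
next
  case (Suc M)
  show ?case
  proof (cases "\<exists>C. Q C")
    case False
    then show ?thesis by auto
  next
    case True
    then obtain C0 where "Q C0" ..
    have "\<not> disjoint_members (\<lambda>C. Q C \<and> C \<inter> C0 = {}) M"
    proof
      assume "disjoint_members (\<lambda>C. Q C \<and> C \<inter> C0 = {}) M"
      then obtain A where "\<forall>i<M. Q (A i) \<and> A i \<inter> C0 = {}" and "disjoint_family_on A {..<M}"
        unfolding disjoint_members_def by blast
      then have "disjoint_members Q (Suc M)"
        unfolding disjoint_members_def disjoint_family_on_def using \<open>Q C0\<close>
        by (intro exI[of _ "A(M := C0)"]) (fastforce simp: less_Suc_eq)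
      with Suc.prems show False by blast
    qed
    then obtain T where "finite T" "card T \<le> m * M" and hits: "\<forall>C. Q C \<and> C \<inter> C0 = {} \<longrightarrow> C \<inter> T \<noteq> {}"
      using Suc.IH[of "\<lambda>C. Q C \<and> C \<inter> C0 = {}"] Suc.prems(1) by blast
    have "card (T \<union> C0) \<le> m * Suc M"
      using card_Un_le[of T C0] \<open>card T \<le> m * M\<close> Suc.prems(1)[OF \<open>Q C0\<close>] by simp
    moreover have "\<forall>C. Q C \<longrightarrow> C \<inter> (T \<union> C0) \<noteq> {}"
      using hits by blast
    ultimately show ?thesis
      using \<open>finite T\<close> Suc.prems(1)[OF \<open>Q C0\<close>] by (intro exI[of _ "T \<union> C0"]) auto
  qed
qed

lemma ramsey_ordered_pairs:
  assumes "finite U"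
  shows "\<exists>N. \<forall>f :: nat \<Rightarrow> nat \<Rightarrow> 'c. (\<forall>i<N. \<forall>j<N. f i j \<in> U) \<longrightarrow>
           (\<exists>H c. H \<subseteq> {..<N} \<and> finite H \<and> card H = r \<and> (\<forall>i\<in>H. \<forall>j\<in>H. i < j \<longrightarrow> f i j = c))"
proof -
  obtain g where g: "bij_betw g U {0..<card U}"
    using ex_bij_betw_finite_nat[OF \<open>finite U\<close>] ..
  obtain N :: nat where N: "partn_lst {..<N} (replicate (card U) r) 2"
    using ramsey_full[of "replicate (card U) r" 2] ..
  show ?thesis
  proof (intro exI[of _ N] allI impI)
    fix f :: "nat \<Rightarrow> nat \<Rightarrow> 'c"
    assume f_U: "\<forall>i<N. \<forall>j<N. f i j \<in> U"
    define F where "F X = g (f (Min X) (Max X))" for X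
    have "F \<in> [{..<N}]\<^bsup>2\<^esup> \<rightarrow> {..<card U}"
    proof
      fix X assume "X \<in> [{..<N}]\<^bsup>2\<^esup>"
      then have "Min X < N" "Max X < N"
        by (auto simp: nsets_def card_2_iff)
      then show "F X \<in> {..<card U}"
        using f_U bij_betwE[OF g] unfolding F_def by auto
    qed
    then obtain col H where H: "H \<in> [{..<N}]\<^bsup>r\<^esup>" and mono: "F ` [H]\<^bsup>2\<^esup> \<subseteq> {col}"
      using partn_lstE[OF N] by (metis length_replicate nth_replicate)
    have "f i j = inv_into U g col" if "i \<in> H" "j \<in> H" "i < j" for i j
    proof -
      have "{i, j} \<in> [H]\<^bsup>2\<^esup>"
        using that by simp
      then have "F {i, j} = col"
        using mono by blast
      then have "g (f i j) = col"
        using \<open>i < j\<close> unfolding F_def by simp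
      moreover have "f i j \<in> U"
        using f_U H that unfolding nsets_def by auto
      ultimately show ?thesis
        using inv_into_f_f[OF bij_betw_imp_inj_on[OF g]] by metis
    qed
    then show "\<exists>H c. H \<subseteq> {..<N} \<and> finite H \<and> card H = r \<and> (\<forall>i\<in>H. \<forall>j\<in>H. i < j \<longrightarrow> f i j = c)"
      using H unfolding nsets_def by blast
  qed
qed

lemma ramsey_bipartite_grid:
  fixes n :: nat
  assumes "finite U"
  shows "\<exists>N. \<forall>f :: nat \<Rightarrow> nat \<Rightarrow> 'c. (\<forall>i<N. \<forall>j<N. f i j \<in> U) \<longrightarrow>
           (\<exists>\<iota> \<kappa> c. inj_on \<iota> {..<n} \<and> inj_on \<kappa> {..<n} \<and> \<iota> ` {..<n} \<subseteq> {..<N} \<and> \<kappa> ` {..<n} \<subseteq> {..<N} \<and>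
              (\<forall>t<n. \<forall>u<n. f (\<iota> t) (\<kappa> u) = c))"
proof -
  obtain N where N: "\<forall>f :: nat \<Rightarrow> nat \<Rightarrow> 'c. (\<forall>i<N. \<forall>j<N. f i j \<in> U) \<longrightarrow>
      (\<exists>H c. H \<subseteq> {..<N} \<and> finite H \<and> card H = 2 * n \<and> (\<forall>i\<in>H. \<forall>j\<in>H. i < j \<longrightarrow> f i j = c))"
    using ramsey_ordered_pairs[OF \<open>finite U\<close>, of "2 * n"] ..
  show ?thesis
  proof (intro exI[of _ N] allI impI)
    fix f :: "nat \<Rightarrow> nat \<Rightarrow> 'c"
    assume "\<forall>i<N. \<forall>j<N. f i j \<in> U"
    then obtain H c where "H \<subseteq> {..<N}" "finite H" "card H = 2 * n"
      and mono: "\<forall>i\<in>H. \<forall>j\<in>H. i < j \<longrightarrow> f i j = c"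
      using N by metis
    define xs where "xs = sorted_list_of_set H"
    have "length xs = 2 * n" "sorted_wrt (<) xs" "distinct xs"
      unfolding xs_def using \<open>card H = 2 * n\<close> by simp_all
    have xs_H: "xs ! i \<in> H" if "i < 2 * n" for i
      using that \<open>length xs = 2 * n\<close> \<open>finite H\<close> unfolding xs_def by (metis nth_mem set_sorted_list_of_set)
    have xs_less: "xs ! i < N" if "i < 2 * n" for i
      using xs_H[OF that] \<open>H \<subseteq> {..<N}\<close> by auto
    define \<iota> where "\<iota> t = xs ! t" for t
    define \<kappa> where "\<kappa> u = xs ! (n + u)" for u
    have "f (\<iota> t) (\<kappa> u) = c" if "t < n" "u < n" for t u
      using mono xs_H sorted_wrt_nth_less[OF \<open>sorted_wrt (<) xs\<close>, of t "n + u"] that \<open>length xs = 2 * n\<close>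
      unfolding \<iota>_def \<kappa>_def by simp
    moreover have "inj_on \<iota> {..<n}" "inj_on \<kappa> {..<n}"
      using nth_eq_iff_index_eq[OF \<open>distinct xs\<close>] \<open>length xs = 2 * n\<close>
      unfolding \<iota>_def \<kappa>_def inj_on_def by auto
    moreover have "\<iota> ` {..<n} \<subseteq> {..<N}" "\<kappa> ` {..<n} \<subseteq> {..<N}"
      using xs_less unfolding \<iota>_def \<kappa>_def by auto
    ultimately show "\<exists>\<iota> \<kappa> c. inj_on \<iota> {..<n} \<and> inj_on \<kappa> {..<n} \<and> \<iota> ` {..<n} \<subseteq> {..<N} \<and>
        \<kappa> ` {..<n} \<subseteq> {..<N} \<and> (\<forall>t<n. \<forall>u<n. f (\<iota> t) (\<kappa> u) = c)"
      by blast
  qed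
qed

lemma out_nbhd_Int_in_nbhd: "digraph V E \<Longrightarrow> out_nbhd V E v \<inter> in_nbhd V E v = {}"
  unfolding digraph_def out_nbhd_def in_nbhd_def by blast

lemma disjoint_family_on_reindex:
  assumes "disjoint_family_on A I" and "inj_on \<iota> S" and "\<iota> ` S \<subseteq> I"
  shows "disjoint_family_on (A \<circ> \<iota>) S"
  unfolding disjoint_family_on_def
proof (intro ballI impI)
  fix s s' assume "s \<in> S" "s' \<in> S" "s \<noteq> s'"
  then have "\<iota> s \<noteq> \<iota> s'" "\<iota> s \<in> I" "\<iota> s' \<in> I"
    using inj_onD[OF assms(2)] assms(3) by blast+
  then show "(A \<circ> \<iota>) s \<inter> (A \<circ> \<iota>) s' = {}"
    using disjoint_family_onD[OF assms(1)] by simp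
qed

lemma inj_on_transversal:
  assumes "disjoint_family_on A S" and "\<And>t. t \<in> S \<Longrightarrow> x t \<in> A t"
  shows "inj_on x S"
proof (rule inj_onI)
  fix t t' assume "t \<in> S" "t' \<in> S" "x t = x t'"
  then have "A t \<inter> A t' \<noteq> {}"
    using assms(2)[of t] assms(2)[of t'] by auto
  then show "t = t'"
    using disjoint_family_onD[OF assms(1) \<open>t \<in> S\<close> \<open>t' \<in> S\<close>] by blast
qed

lemma rich_if_complete_between_cliques:
  assumes "digraph V E"
    and As: "\<forall>i<k. k_clique m V E (As i) \<and> As i \<subseteq> out_nbhd V E v" "disjoint_family_on As {..<k}"
    and Bs: "\<forall>i<k. k_clique m V E (Bs i) \<and> Bs i \<subseteq> in_nbhd V E v" "disjoint_family_on Bs {..<k}"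
    and complete: "\<forall>i<k. \<forall>j<k. \<forall>x\<in>As i. \<forall>y\<in>Bs j. uadj E x y"
  shows "rich k m V E v"
proof -
  have "(\<Union>i<k. As i) \<inter> (\<Union>i<k. Bs i) = {}"
    using As(1) Bs(1) out_nbhd_Int_in_nbhd[OF \<open>digraph V E\<close>, of v] by blast
  then have "ucomplete E (\<Union>i<k. As i) (\<Union>i<k. Bs i)"
    using complete unfolding ucomplete_def by blast
  then show ?thesis
    using As Bs unfolding rich_def disjoint_family_on_def
    by (intro exI[of _ As] exI[of _ Bs]) simp
qed

lemma spread_adjacent_transversals:
  assumes "spread lam V E" and "v \<in> V" and "inj_on a {..<lam}" and "inj_on b {..<lam}"
    and "a ` {..<lam} \<subseteq> out_nbhd V E v" and "b ` {..<lam} \<subseteq> in_nbhd V E v"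
  shows "\<exists>t<lam. \<exists>u<lam. uadj E (a t) (b u)"
proof -
  have "card (a ` {..<lam}) = lam" "card (b ` {..<lam}) = lam"
    using card_image[OF assms(3)] card_image[OF assms(4)] by simp_all
  then have "\<exists>x\<in>a ` {..<lam}. \<exists>y\<in>b ` {..<lam}. uadj E x y"
    using assms(1)[unfolded spread_def, rule_format, OF assms(2,5,6)] by blast
  then show ?thesis
    by blast
qed

lemma rich_if_uniform_adjacency_pattern:
  assumes "digraph V E" and "spread lam V E" and "v \<in> V" and "k \<le> n" and "lam \<le> n"
    and A: "\<forall>t<n. k_clique m V E (A t) \<and> A t \<subseteq> out_nbhd V E v" "disjoint_family_on A {..<n}"
    and B: "\<forall>t<n. k_clique m V E (B t) \<and> B t \<subseteq> in_nbhd V E v" "disjoint_family_on B {..<n}"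
    and ea: "\<forall>t<n. bij_betw (ea t) {..<m} (A t)" and eb: "\<forall>t<n. bij_betw (eb t) {..<m} (B t)"
    and uniform: "\<forall>t<n. \<forall>u<n. \<forall>a<m. \<forall>b<m. uadj E (ea t a) (eb u b) \<longleftrightarrow> (a, b) \<in> P"
  shows "rich k m V E v"
proof (cases "{..<m} \<times> {..<m} \<subseteq> P")
  case True
  have "\<forall>t<k. \<forall>u<k. \<forall>x\<in>A t. \<forall>y\<in>B u. uadj E x y"
  proof (intro allI impI ballI)
    fix t u x y assume "t < k" "u < k" "x \<in> A t" "y \<in> B u"
    moreover have "A t = ea t ` {..<m}" "B u = eb u ` {..<m}"
      using ea eb \<open>t < k\<close> \<open>u < k\<close> \<open>k \<le> n\<close> by (auto simp: bij_betw_def)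
    ultimately obtain a b where "a < m" "b < m" "x = ea t a" "y = eb u b"
      by blast
    then show "uadj E x y"
      using True uniform \<open>t < k\<close> \<open>u < k\<close> \<open>k \<le> n\<close> by auto
  qed
  moreover have "disjoint_family_on A {..<k}" "disjoint_family_on B {..<k}"
    using disjoint_family_on_mono[OF _ A(2)] disjoint_family_on_mono[OF _ B(2)] \<open>k \<le> n\<close> by auto
  ultimately show ?thesis
    using rich_if_complete_between_cliques[OF \<open>digraph V E\<close>, of k m A v B] A(1) B(1) \<open>k \<le> n\<close> by auto
next
  case False
  then obtain a b where "a < m" "b < m" "(a, b) \<notin> P"
    by auto
  \<comment> \<open>Picking the a-th vertex of each A t and the b-th vertex of each B u violates spreadness.\<close>
  have mem: "ea t a \<in> A t" "eb t b \<in> B t" if "t < lam" for t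
  proof -
    have "t < n"
      using that \<open>lam \<le> n\<close> by simp
    then show "ea t a \<in> A t" "eb t b \<in> B t"
      using bij_betwE[of "ea t" "{..<m}" "A t"] bij_betwE[of "eb t" "{..<m}" "B t"] ea eb \<open>a < m\<close> \<open>b < m\<close>
      by auto
  qed
  have "{..<lam} \<subseteq> {..<n}"
    using \<open>lam \<le> n\<close> by auto
  have inj_a: "inj_on (\<lambda>t. ea t a) {..<lam}"
    by (rule inj_on_transversal[OF disjoint_family_on_mono[OF \<open>{..<lam} \<subseteq> {..<n}\<close> A(2)]]) (simp add: mem)
  have inj_b: "inj_on (\<lambda>t. eb t b) {..<lam}"
    by (rule inj_on_transversal[OF disjoint_family_on_mono[OF \<open>{..<lam} \<subseteq> {..<n}\<close> B(2)]]) (simp add: mem)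
  have "(\<lambda>t. ea t a) ` {..<lam} \<subseteq> out_nbhd V E v" and "(\<lambda>t. eb t b) ` {..<lam} \<subseteq> in_nbhd V E v"
    using A(1) B(1) mem \<open>{..<lam} \<subseteq> {..<n}\<close> by (auto simp: subset_iff)
  then obtain t u where "t < lam" "u < lam" "uadj E (ea t a) (eb u b)"
    using spread_adjacent_transversals[OF \<open>spread lam V E\<close> \<open>v \<in> V\<close> inj_a inj_b] by blast
  moreover have "t < n" "u < n" if "t < lam" "u < lam" for t u
    using that \<open>lam \<le> n\<close> by simp_all
  ultimately show ?thesis
    using uniform \<open>a < m\<close> \<open>b < m\<close> \<open>(a, b) \<notin> P\<close> by blast
qed

lemma rich_if_many_disjoint_cliques:
  "\<exists>N. \<forall>(V :: 'a set) E v. digraph V E \<longrightarrow> spread lam V E \<longrightarrow> v \<in> V \<longrightarrow>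
     disjoint_members (\<lambda>C. k_clique m V E C \<and> C \<subseteq> out_nbhd V E v) N \<longrightarrow>
     disjoint_members (\<lambda>C. k_clique m V E C \<and> C \<subseteq> in_nbhd V E v) N \<longrightarrow> rich k m V E v"
proof -
  define n where "n = max k lam"
  obtain N where N: "\<forall>f :: nat \<Rightarrow> nat \<Rightarrow> (nat \<times> nat) set. (\<forall>i<N. \<forall>j<N. f i j \<in> Pow ({..<m} \<times> {..<m})) \<longrightarrow>
      (\<exists>\<iota> \<kappa> c. inj_on \<iota> {..<n} \<and> inj_on \<kappa> {..<n} \<and> \<iota> ` {..<n} \<subseteq> {..<N} \<and> \<kappa> ` {..<n} \<subseteq> {..<N} \<and>
         (\<forall>t<n. \<forall>u<n. f (\<iota> t) (\<kappa> u) = c))"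
    using ramsey_bipartite_grid[of "Pow ({..<m} \<times> {..<m})" n] by auto
  show ?thesis
  proof (intro exI[of _ N] allI impI)
    fix V :: "'a set" and E v
    assume "digraph V E" and "spread lam V E" and "v \<in> V"
      and "disjoint_members (\<lambda>C. k_clique m V E C \<and> C \<subseteq> out_nbhd V E v) N"
      and "disjoint_members (\<lambda>C. k_clique m V E C \<and> C \<subseteq> in_nbhd V E v) N"
    then obtain A B where A: "\<forall>i<N. k_clique m V E (A i) \<and> A i \<subseteq> out_nbhd V E v" "disjoint_family_on A {..<N}"
      and B: "\<forall>i<N. k_clique m V E (B i) \<and> B i \<subseteq> in_nbhd V E v" "disjoint_family_on B {..<N}"
      unfolding disjoint_members_def by blast
    have "\<forall>i<N. \<exists>h. bij_betw h {..<m} (A i)" "\<forall>i<N. \<exists>h. bij_betw h {..<m} (B i)"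
      using A(1) B(1) ex_bij_betw_nat_finite unfolding k_clique_def atLeast0LessThan by metis+
    then obtain ea eb where ea: "\<forall>i<N. bij_betw (ea i) {..<m} (A i)"
      and eb: "\<forall>i<N. bij_betw (eb i) {..<m} (B i)"
      by metis
    define pattern where "pattern i j = {(a, b). a < m \<and> b < m \<and> uadj E (ea i a) (eb j b)}" for i j
    have "\<forall>i<N. \<forall>j<N. pattern i j \<in> Pow ({..<m} \<times> {..<m})"
      unfolding pattern_def by auto
    then obtain \<iota> \<kappa> c where inj: "inj_on \<iota> {..<n}" "inj_on \<kappa> {..<n}"
      and range: "\<iota> ` {..<n} \<subseteq> {..<N}" "\<kappa> ` {..<n} \<subseteq> {..<N}"
      and uniform: "\<forall>t<n. \<forall>u<n. pattern (\<iota> t) (\<kappa> u) = c"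
      using mp[OF spec[OF N, of pattern]] by metis
    have index_less: "\<iota> t < N" "\<kappa> t < N" if "t < n" for t
      using range that by auto
    show "rich k m V E v"
    proof (rule rich_if_uniform_adjacency_pattern[of V E lam v k n m "A \<circ> \<iota>" "B \<circ> \<kappa>" "ea \<circ> \<iota>" "eb \<circ> \<kappa>" c])
      show "\<forall>t<n. k_clique m V E ((A \<circ> \<iota>) t) \<and> (A \<circ> \<iota>) t \<subseteq> out_nbhd V E v"
        "\<forall>t<n. k_clique m V E ((B \<circ> \<kappa>) t) \<and> (B \<circ> \<kappa>) t \<subseteq> in_nbhd V E v"
        "\<forall>t<n. bij_betw ((ea \<circ> \<iota>) t) {..<m} ((A \<circ> \<iota>) t)"
        "\<forall>t<n. bij_betw ((eb \<circ> \<kappa>) t) {..<m} ((B \<circ> \<kappa>) t)"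
        using A(1) B(1) ea eb index_less by auto
      show "disjoint_family_on (A \<circ> \<iota>) {..<n}" "disjoint_family_on (B \<circ> \<kappa>) {..<n}"
        using disjoint_family_on_reindex[OF A(2) inj(1) range(1)] disjoint_family_on_reindex[OF B(2) inj(2) range(2)]
        by simp_all
      show "\<forall>t<n. \<forall>u<n. \<forall>a<m. \<forall>b<m. uadj E ((ea \<circ> \<iota>) t a) ((eb \<circ> \<kappa>) u b) \<longleftrightarrow> (a, b) \<in> c"
        using uniform unfolding pattern_def by auto
    qed (simp_all add: \<open>digraph V E\<close> \<open>spread lam V E\<close> \<open>v \<in> V\<close> n_def)
  qed
qed

lemma k_clique_Diff_singleton:
  assumes "k_clique (m + 1) X E C" and "X \<subseteq> V" and "s \<in> C"
  shows "k_clique m V E (C - {s})"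
  using assms unfolding k_clique_def is_clique_def by auto

lemma no_source_clique_if_hitting:
  assumes "X \<subseteq> V"
    and hit: "\<And>s C. s \<in> X \<Longrightarrow> k_clique m V E C \<Longrightarrow> C \<subseteq> out_nbhd V E s \<Longrightarrow> C \<inter> T s \<noteq> {}"
    and avoid: "\<And>s. s \<in> X \<Longrightarrow> T s \<inter> X \<subseteq> {s}"
  shows "no_source_clique (m + 1) E X"
  unfolding no_source_clique_def
proof (intro allI impI notI)
  fix C assume C: "k_clique (m + 1) X E C" and "\<exists>s. is_source E C s"
  then obtain s where s: "is_source E C s" by blast
  have "C \<subseteq> X" "s \<in> C"
    using C s unfolding k_clique_def is_source_def by auto
  have "C - {s} \<subseteq> out_nbhd V E s"
    using s \<open>C \<subseteq> X\<close> \<open>X \<subseteq> V\<close> unfolding is_source_def out_nbhd_def by blast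
  then have "(C - {s}) \<inter> T s \<noteq> {}"
    using hit \<open>s \<in> C\<close> \<open>C \<subseteq> X\<close> k_clique_Diff_singleton[OF C \<open>X \<subseteq> V\<close> \<open>s \<in> C\<close>] by blast
  then show False
    using avoid[of s] \<open>s \<in> C\<close> \<open>C \<subseteq> X\<close> by blast
qed

lemma no_sink_clique_if_hitting:
  assumes "X \<subseteq> V"
    and hit: "\<And>s C. s \<in> X \<Longrightarrow> k_clique m V E C \<Longrightarrow> C \<subseteq> in_nbhd V E s \<Longrightarrow> C \<inter> T s \<noteq> {}"
    and avoid: "\<And>s. s \<in> X \<Longrightarrow> T s \<inter> X \<subseteq> {s}"
  shows "no_sink_clique (m + 1) E X"
  unfolding no_sink_clique_def
proof (intro allI impI notI)
  fix C assume C: "k_clique (m + 1) X E C" and "\<exists>s. is_sink E C s"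
  then obtain s where s: "is_sink E C s" by blast
  have "C \<subseteq> X" "s \<in> C"
    using C s unfolding k_clique_def is_sink_def by auto
  have "C - {s} \<subseteq> in_nbhd V E s"
    using s \<open>C \<subseteq> X\<close> \<open>X \<subseteq> V\<close> unfolding is_sink_def in_nbhd_def by blast
  then have "(C - {s}) \<inter> T s \<noteq> {}"
    using hit \<open>s \<in> C\<close> \<open>C \<subseteq> X\<close> k_clique_Diff_singleton[OF C \<open>X \<subseteq> V\<close> \<open>s \<in> C\<close>] by blast
  then show False
    using avoid[of s] \<open>s \<in> C\<close> \<open>C \<subseteq> X\<close> by blast
qed

lemma neighbourhood_clique_hitting_sets:
  assumes bounded: "\<forall>v\<in>V. \<not> (disjoint_members (\<lambda>C. k_clique m V E C \<and> C \<subseteq> out_nbhd V E v) M \<and>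
                           disjoint_members (\<lambda>C. k_clique m V E C \<and> C \<subseteq> in_nbhd V E v) M)"
  obtains T out_side where "\<And>v. v \<in> V \<Longrightarrow> finite (T v)" and "\<And>v. v \<in> V \<Longrightarrow> card (T v) \<le> m * M"
    and "\<And>v C. v \<in> V \<Longrightarrow> out_side v \<Longrightarrow> k_clique m V E C \<Longrightarrow> C \<subseteq> out_nbhd V E v \<Longrightarrow> C \<inter> T v \<noteq> {}"
    and "\<And>v C. v \<in> V \<Longrightarrow> \<not> out_side v \<Longrightarrow> k_clique m V E C \<Longrightarrow> C \<subseteq> in_nbhd V E v \<Longrightarrow> C \<inter> T v \<noteq> {}"
proof -
  define out_side where
    "out_side v \<longleftrightarrow> \<not> disjoint_members (\<lambda>C. k_clique m V E C \<and> C \<subseteq> out_nbhd V E v) M" for v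
  define Q where "Q v C \<longleftrightarrow> k_clique m V E C \<and> C \<subseteq> (if out_side v then out_nbhd V E v else in_nbhd V E v)"
    for v C
  have "\<exists>T. finite T \<and> card T \<le> m * M \<and> (\<forall>C. Q v C \<longrightarrow> C \<inter> T \<noteq> {})" if "v \<in> V" for v
  proof (rule hitting_set_if_no_disjoint_members)
    show "finite C \<and> card C \<le> m" if "Q v C" for C
      using that unfolding Q_def k_clique_def by simp
    show "\<not> disjoint_members (Q v) M"
      using bounded that unfolding Q_def out_side_def by (cases "out_side v") (simp_all add: out_side_def)
  qed
  then obtain T where T: "\<forall>v\<in>V. finite (T v) \<and> card (T v) \<le> m * M \<and> (\<forall>C. Q v C \<longrightarrow> C \<inter> T v \<noteq> {})"
    by metis
  show thesis
    by (rule that[of T out_side]) (use T in \<open>auto simp: Q_def\<close>)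
qed

lemma partition_from_hitting_colouring:
  fixes c :: "'a \<Rightarrow> nat"
  assumes hit_out: "\<And>v C. v \<in> V \<Longrightarrow> out_side v \<Longrightarrow> k_clique m V E C \<Longrightarrow> C \<subseteq> out_nbhd V E v \<Longrightarrow> C \<inter> T v \<noteq> {}"
    and hit_in: "\<And>v C. v \<in> V \<Longrightarrow> \<not> out_side v \<Longrightarrow> k_clique m V E C \<Longrightarrow> C \<subseteq> in_nbhd V E v \<Longrightarrow> C \<inter> T v \<noteq> {}"
    and c_less: "\<forall>v\<in>V. c v < K"
    and c_proper: "\<forall>v\<in>V. \<forall>u\<in>V. u \<in> T v \<longrightarrow> u \<noteq> v \<longrightarrow> c u \<noteq> c v"
  shows "\<exists>X. (\<Union>i < 2 * K. X i) = V \<and> (\<forall>i < 2 * K. \<forall>j < 2 * K. i \<noteq> j \<longrightarrow> X i \<inter> X j = {}) \<and>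
             (\<forall>i < 2 * K. no_source_clique (m + 1) E (X i) \<or> no_sink_clique (m + 1) E (X i))"
proof -
  define label where "label v = (if out_side v then c v else K + c v)" for v
  define X where "X i = {v\<in>V. label v = i}" for i
  have "label v < 2 * K" if "v \<in> V" for v
    using c_less that unfolding label_def by auto
  then have "(\<Union>i < 2 * K. X i) = V"
    unfolding X_def by blast
  moreover have "\<forall>i < 2 * K. \<forall>j < 2 * K. i \<noteq> j \<longrightarrow> X i \<inter> X j = {}"
    unfolding X_def by auto
  moreover have "no_source_clique (m + 1) E (X i) \<or> no_sink_clique (m + 1) E (X i)" for i
  proof -
    have "X i \<subseteq> V"
      unfolding X_def by auto
    have "c v = i mod K" if "v \<in> X i" for v
      using that c_less unfolding X_def label_def by auto
    then have "c u = c s" if "u \<in> X i" "s \<in> X i" for u s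
      using that by simp
    then have avoid: "T s \<inter> X i \<subseteq> {s}" if "s \<in> X i" for s
      using that c_proper \<open>X i \<subseteq> V\<close> by blast
    show ?thesis
    proof (cases "i < K")
      case True
      then have "out_side s" if "s \<in> X i" for s
        using that unfolding X_def label_def by (auto split: if_splits)
      then have "no_source_clique (m + 1) E (X i)"
        by (intro no_source_clique_if_hitting[OF \<open>X i \<subseteq> V\<close> _ avoid] hit_out) (use \<open>X i \<subseteq> V\<close> in auto)
      then show ?thesis ..
    next
      case False
      then have "\<not> out_side s" if "s \<in> X i" for s
        using that c_less unfolding X_def label_def by (auto split: if_splits)
      then have "no_sink_clique (m + 1) E (X i)"
        by (intro no_sink_clique_if_hitting[OF \<open>X i \<subseteq> V\<close> _ avoid] hit_in) (use \<open>X i \<subseteq> V\<close> in auto)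
      then show ?thesis ..
    qed
  qed
  ultimately show ?thesis
    by blast
qed


lemma partition_if_bounded_disjoint_cliques:
  assumes "finite V"
    and bounded: "\<forall>v\<in>V. \<not> (disjoint_members (\<lambda>C. k_clique m V E C \<and> C \<subseteq> out_nbhd V E v) M \<and>
                           disjoint_members (\<lambda>C. k_clique m V E C \<and> C \<subseteq> in_nbhd V E v) M)"
  shows "\<exists>X. (\<Union>i < 2 * (2 * (m * M) + 1). X i) = V \<and>
           (\<forall>i < 2 * (2 * (m * M) + 1). \<forall>j < 2 * (2 * (m * M) + 1). i \<noteq> j \<longrightarrow> X i \<inter> X j = {}) \<and>
           (\<forall>i < 2 * (2 * (m * M) + 1). no_source_clique (m + 1) E (X i) \<or> no_sink_clique (m + 1) E (X i))"
proof -
  obtain T out_side where T_fin: "\<And>v. v \<in> V \<Longrightarrow> finite (T v)"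
    and T_card: "\<And>v. v \<in> V \<Longrightarrow> card (T v) \<le> m * M"
    and hit_out: "\<And>v C. v \<in> V \<Longrightarrow> out_side v \<Longrightarrow> k_clique m V E C \<Longrightarrow> C \<subseteq> out_nbhd V E v \<Longrightarrow> C \<inter> T v \<noteq> {}"
    and hit_in: "\<And>v C. v \<in> V \<Longrightarrow> \<not> out_side v \<Longrightarrow> k_clique m V E C \<Longrightarrow> C \<subseteq> in_nbhd V E v \<Longrightarrow> C \<inter> T v \<noteq> {}"
    by (rule neighbourhood_clique_hitting_sets[OF bounded]) blast
  have "card (T v \<inter> V) \<le> m * M" if "v \<in> V" for v
    using card_mono[OF T_fin[OF that], of "T v \<inter> V"] T_card[OF that] by simp
  then obtain c where c_less: "\<forall>v\<in>V. c v < 2 * (m * M) + 1"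
    and c_proper: "\<forall>v\<in>V. \<forall>u\<in>V. u \<in> T v \<longrightarrow> u \<noteq> v \<longrightarrow> c u \<noteq> c v"
    using bounded_conflict_colouring[OF \<open>finite V\<close>] by metis
  show ?thesis
    using hit_out hit_in c_less c_proper by (rule partition_from_hitting_colouring)
qed

theorem theorem3p2:
  fixes lam k m :: nat
  assumes "k \<ge> 1" and "m \<ge> 1"
  shows "\<exists>t::nat. \<forall>(V::nat set) E.
           digraph V E \<longrightarrow> spread lam V E \<longrightarrow> (\<forall>v \<in> V. \<not> rich k m V E v) \<longrightarrow>
           (\<exists>X :: nat \<Rightarrow> nat set.
              (\<Union>i < t. X i) = V \<and>
              (\<forall>i < t. \<forall>j < t. i \<noteq> j \<longrightarrow> X i \<inter> X j = {}) \<and>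
              (\<forall>i < t. no_source_clique (m + 1) E (X i) \<or> no_sink_clique (m + 1) E (X i)))"
  \<comment> \<open>The argument does not need the hypotheses k \<ge> 1 and m \<ge> 1.\<close>
proof -
  obtain M where M: "\<forall>(V :: nat set) E v. digraph V E \<longrightarrow> spread lam V E \<longrightarrow> v \<in> V \<longrightarrow>
      disjoint_members (\<lambda>C. k_clique m V E C \<and> C \<subseteq> out_nbhd V E v) M \<longrightarrow>
      disjoint_members (\<lambda>C. k_clique m V E C \<and> C \<subseteq> in_nbhd V E v) M \<longrightarrow> rich k m V E v"
    using rich_if_many_disjoint_cliques[where 'a = nat] ..
  show ?thesis
  proof (intro exI[of _ "2 * (2 * (m * M) + 1)"] allI impI)
    fix V :: "nat set" and E
    assume "digraph V E" and "spread lam V E" and "\<forall>v \<in> V. \<not> rich k m V E v"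
    have "finite V"
      using \<open>digraph V E\<close> unfolding digraph_def by simp
    moreover have "\<forall>v\<in>V. \<not> (disjoint_members (\<lambda>C. k_clique m V E C \<and> C \<subseteq> out_nbhd V E v) M \<and>
                    disjoint_members (\<lambda>C. k_clique m V E C \<and> C \<subseteq> in_nbhd V E v) M)"
      using M \<open>digraph V E\<close> \<open>spread lam V E\<close> \<open>\<forall>v \<in> V. \<not> rich k m V E v\<close> by blast
    ultimately show "\<exists>X. (\<Union>i < 2 * (2 * (m * M) + 1). X i) = V \<and>
        (\<forall>i < 2 * (2 * (m * M) + 1). \<forall>j < 2 * (2 * (m * M) + 1). i \<noteq> j \<longrightarrow> X i \<inter> X j = {}) \<and>
        (\<forall>i < 2 * (2 * (m * M) + 1). no_source_clique (m + 1) E (X i) \<or> no_sink_clique (m + 1) E (X i))"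
      by (rule partition_if_bounded_disjoint_cliques)
  qed
qed

end
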